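(* The bounds $LB$ and $UB$ converge to the continuous Erlang-C function uniformly in the safety factor: $$\lim_{\lambda\to\infty}\sup_{\beta>0}\big[\tilde\alpha(\beta,\lambda)-LB(\beta,\lambda)\big]=0,\qquad \lim_{\lambda\to\infty}\sup_{\beta>0}\big[UB(\beta,\lambda)-\tilde\alpha(\beta,\lambda)\big]=0.$$
   Context: $\phi,\Phi$ are the standard normal density and distribution function. For $\lambda>0$ and real $n\ge 0$, the continuous Erlang-C function is $\bar\alpha(n,\lambda)=\min\Big\{1,\big[\lambda\int_0^\infty t e^{-\lambda t}(1+t)^{n-1}\,dt\big]^{-1}\Big\}$ (for $n\ge\lambda$ the minimum is attained by the second term; for integer $n>\lambda$ it equals the Erlang-C probability that an arriving customer waits in an $M/M/n$ queue with arrival rate $\lambda$ and service rate 1). Set $\tilde\alpha(\beta,\lambda)=\bar\alpha(\lambda+\beta\sqrt\lambda,\lambda)$ for $\beta\ge0$. For $\lambda>0,\beta\ge 0$ set $n=\lambda+\beta\sqrt{\lambda}$, $\rho=\lambda/n$, $a=\sqrt{-2n(1-\rho+\ln\rho)}$, $\gamma=(n-\lambda)/\sqrt{n}$, and $UB(\beta,\lambda)=\left[\rho+\gamma\left(\frac{\Phi(a)}{\phi(a)}+\frac{2}{3\sqrt{n}}\right)\right]^{-1}$, $LB(\beta,\lambda)=\left[\rho+\gamma\left(\frac{\Phi(a)}{\phi(a)}+\frac{2}{3\sqrt{n}}+\frac{1}{\phi(a)(12n-1)}\right)\right]^{-1}$. It is known (Janssen, van Leeuwaarden and Zwart) that $LB(\beta,\lambda)\le\tilde\alpha(\beta,\lambda)\le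 UB(\beta,\lambda)$ for all $\lambda>0$, $\beta>0$. *)

theory Defs
  imports "HOL-Analysis.Analysis"
begin

definition phi :: "real \<Rightarrow> real" where
  "phi x = exp (- (x\<^sup>2) / 2) / sqrt (2 * pi)"

definition Phi :: "real \<Rightarrow> real" where
  "Phi x = (LBINT t:{..x}. phi t)"

definition alpha_bar :: "real \<Rightarrow> real \<Rightarrow> real" where
  "alpha_bar n lam = min 1
     (inverse (lam * (LBINT t:{0..}. t * exp (- lam * t) * (1 + t) powr (n - 1))))"

definition alpha_tilde :: "real \<Rightarrow> real \<Rightarrow> real" where
  "alpha_tilde \<beta> lam = alpha_bar (lam + \<beta> * sqrt lam) lam"

definition UB :: "real \<Rightarrow> real \<Rightarrow> real" where
  "UB \<beta> lam = (let n = lam + \<beta> * sqrt lam; \<rho> = lam / n;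
      a = sqrt (- 2 * n * (1 - \<rho> + ln \<rho>)); \<gamma> = (n - lam) / sqrt n
    in inverse (\<rho> + \<gamma> * (Phi a / phi a + 2 / (3 * sqrt n))))"

definition LB :: "real \<Rightarrow> real \<Rightarrow> real" where
  "LB \<beta> lam = (let n = lam + \<beta> * sqrt lam; \<rho> = lam / n;
      a = sqrt (- 2 * n * (1 - \<rho> + ln \<rho>)); \<gamma> = (n - lam) / sqrt n
    in inverse (\<rho> + \<gamma> * (Phi a / phi a + 2 / (3 * sqrt n)
                               + 1 / (phi a * (12 * n - 1)))))"

end

theory Submission
  imports Defs "HOL-Probability.Distributions" "HOL-Real_Asymp.Real_Asymp"
begin

text \<open>
  Write \<open>n = \<lambda> + \<beta> sqrt \<lambda>\<close>, \<open>\<rho> = \<lambda> / n\<close> and \<open>psi z = z - 1 - ln z\<close>. Integrating by parts,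
  the reciprocal of the Erlang-C value is \<open>1 + (n - \<lambda>) \<integral>\<^sub>0\<^sup>\<infinity> (1 + t) powr (n - 1) exp (-\<lambda> t) dt\<close>,
  and with \<open>z = \<rho> (1 + t)\<close> the integrand equals \<open>exp (n psi \<rho>) exp (-n psi z) \<rho> / z\<close>.
  Replacing \<open>\<rho> / z\<close> by \<open>\<rho> s'(z)\<close>, where \<open>s z = sgn (z - 1) sqrt (2 psi z)\<close>, makes the integral
  Gaussian, and \<open>n - \<lambda>\<close> times it is exactly the term \<open>\<gamma> Phi a / phi a\<close> of \<open>UB\<close> and \<open>LB\<close>.
  As \<open>s'(1) = 1\<close> and \<open>exp (-n psi z)\<close> concentrates at \<open>z = 1\<close>, Laplace's method shows that the
  two integrals agree up to a relative error that vanishes as \<open>n \<rightarrow> \<infinity>\<close>, uniformly in \<open>\<rho>\<close>.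
  The Gaussian integral is at least \<open>sqrt (2 \<pi>) Phi 0 / sqrt n\<close>, so the remaining correction
  terms of \<open>UB\<close> and \<open>LB\<close> are relatively small as well; all three quantities have the form
  \<open>1 / (1 + (n - \<lambda>) X)\<close>, and relatively close \<open>X \<ge> 0\<close> give absolutely close values.
\<close>

lemma phi_pos: "phi x > 0"
  by (simp add: phi_def)

lemma phi_eq_normal_density: "phi = normal_density 0 1"
proof -
  have "phi x = std_normal_density x" for x
    by (simp add: phi_def std_normal_density_def)
  then show ?thesis
    by (simp add: fun_eq_iff)
qed

lemma integrable_phi: "integrable lborel phi"
  unfolding phi_eq_normal_density using integrable_normal_density[of 0 1] by simp

lemma continuous_on_phi: "continuous_on S phi"
  unfolding phi_def by (intro continuous_intros) auto

lemma set_integrable_phi: "A \<in> sets lborel \<Longrightarrow> set_integrable lborel A phi"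
  using integrable_phi unfolding set_integrable_def by (intro integrable_mult_indicator) auto

lemma phi_eq_exp_psi: "x\<^sup>2 = 2 * n * p \<Longrightarrow> phi x = exp (- n * p) / sqrt (2 * pi)"
  by (simp add: phi_def)

lemma Phi_eq_Phi_plus_integral:
  assumes "c \<le> x"
  shows "Phi x = Phi c + integral {c..x} phi"
proof -
  have split: "{..x} = {..c} \<union> {c<..x}"
    using assms by auto
  have "Phi x = (LBINT t:{..c}. phi t) + (LBINT t:{c<..x}. phi t)"
    unfolding Phi_def split by (rule set_integral_Un) (auto intro: set_integrable_phi)
  also have "(LBINT t:{c<..x}. phi t) = integral {c<..x} phi"
    by (rule set_borel_integral_eq_integral(2)) (simp add: set_integrable_phi)
  also have "integral {c<..x} phi = integral {c..x} phi"
    by (rule integral_spike_set; rule negligible_subset[OF negligible_sing[of c]]) auto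
  finally show ?thesis
    by (simp add: Phi_def)
qed

lemma Phi_has_real_derivative: "(Phi has_real_derivative phi x) (at x)"
proof -
  let ?c = "x - 1"
  have "((\<lambda>u. integral {?c..u} phi) has_real_derivative phi x) (at x within {?c..x + 1})"
    by (rule integral_has_real_derivative) (auto intro: continuous_on_phi)
  moreover have "{?c<..<x + 1} \<subseteq> {?c..x + 1}"
    by auto
  ultimately have "((\<lambda>u. integral {?c..u} phi) has_real_derivative phi x) (at x within {?c<..<x + 1})"
    by (rule has_field_derivative_subset)
  then have "((\<lambda>u. integral {?c..u} phi) has_real_derivative phi x) (at x)"
    using at_within_open[of x "{?c<..<x + 1}"] by simp
  then have "((\<lambda>u. Phi ?c + integral {?c..u} phi) has_real_derivative phi x) (at x)"
    by (auto intro!: derivative_eq_intros)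
  then show ?thesis
    by (rule has_field_derivative_transform_within_open[where S = "{?c<..}"])
      (auto, metis Phi_eq_Phi_plus_integral less_imp_le)
qed

lemma Phi_nonneg: "Phi x \<ge> 0"
  unfolding Phi_def set_lebesgue_integral_def
  by (rule Bochner_Integration.integral_nonneg)
    (auto simp: indicator_def intro: less_imp_le phi_pos)

lemma Phi_le_1: "Phi x \<le> 1"
proof -
  have "integrable lborel (\<lambda>t. indicator {..x} t *\<^sub>R phi t)"
    using set_integrable_phi[of "{..x}"] unfolding set_integrable_def by simp
  then have "Phi x \<le> (LINT t|lborel. phi t)"
    unfolding Phi_def set_lebesgue_integral_def
    by (intro Bochner_Integration.integral_mono integrable_phi)
      (auto simp: indicator_def less_imp_le phi_pos)
  then show ?thesis
    by (simp add: phi_eq_normal_density)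
qed

lemma Phi_mono:
  assumes "x \<le> y"
  shows "Phi x \<le> Phi y"
proof -
  have "integral {x..y} phi \<ge> 0"
    by (rule integral_nonneg)
      (auto intro: integrable_continuous_interval continuous_on_phi less_imp_le phi_pos)
  then show ?thesis
    using Phi_eq_Phi_plus_integral[OF assms] by linarith
qed

lemma Phi_0_pos: "Phi 0 > 0"
proof -
  have "integral {-1..0} (\<lambda>_::real. phi 1) \<le> integral {-1..0} phi"
  proof (rule Henstock_Kurzweil_Integration.integral_le)
    show "phi 1 \<le> phi x" if "x \<in> {-1..0}" for x
    proof -
      have "x\<^sup>2 \<le> 1"
        using that by (auto simp: abs_square_le_1)
      then show ?thesis
        unfolding phi_def by (auto intro!: divide_right_mono)
    qed
  qed (auto intro: integrable_continuous_interval continuous_on_phi)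
  then show ?thesis
    using Phi_eq_Phi_plus_integral[of "-1" 0] Phi_nonneg[of "-1"] phi_pos[of 1] by simp
qed

lemma Phi_tendsto_at_bot: "(Phi \<longlongrightarrow> 0) at_bot"
proof (rule tendsto_at_botI_sequentially)
  fix X :: "nat \<Rightarrow> real"
  assume X: "filterlim X at_bot sequentially"
  have meas: "(\<lambda>t. indicator {..X n} t *\<^sub>R phi t) \<in> borel_measurable lborel" for n
    using set_integrable_phi[of "{..X n}"] unfolding set_integrable_def
    by (intro borel_measurable_integrable) auto
  have "(\<lambda>n. LINT t|lborel. indicator {..X n} t *\<^sub>R phi t) \<longlonglongrightarrow> (LINT t|lborel. 0 * phi t)"
  proof (rule integral_dominated_convergence[where w = phi])
    show "AE t in lborel. (\<lambda>n. indicator {..X n} t *\<^sub>R phi t) \<longlonglongrightarrow> 0 * phi t"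
    proof (rule AE_I2)
      fix t
      from X have "eventually (\<lambda>n. X n < t) sequentially"
        unfolding filterlim_at_bot_dense by auto
      then show "(\<lambda>n. indicator {..X n} t *\<^sub>R phi t) \<longlonglongrightarrow> 0 * phi t"
        by (intro tendsto_eventually) (auto split: split_indicator elim!: eventually_mono)
    qed
    show "AE t in lborel. norm (indicator {..X n} t *\<^sub>R phi t) \<le> phi t" for n
      by (auto split: split_indicator intro: less_imp_le phi_pos)
  qed (use meas integrable_phi in auto)
  then show "(\<lambda>n. Phi (X n)) \<longlonglongrightarrow> 0"
    unfolding Phi_def set_lebesgue_integral_def by simp
qed

definition psi :: "real \<Rightarrow> real" where
  "psi z = z - 1 - ln z"

lemma psi_nonneg: "z > 0 \<Longrightarrow> psi z \<ge> 0"
  unfolding psi_def using ln_le_minus_one[of z] by simp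

lemma psi_pos: "z > 0 \<Longrightarrow> z \<noteq> 1 \<Longrightarrow> psi z > 0"
  unfolding psi_def using ln_le_minus_one[of z] ln_eq_minus_one[of z] by force

lemma psi_has_real_derivative: "z > 0 \<Longrightarrow> (psi has_real_derivative (1 - 1/z)) (at z)"
  unfolding psi_def[abs_def] by (auto intro!: derivative_eq_intros)

lemma psi_mono_ge_1: "1 \<le> x \<Longrightarrow> x \<le> y \<Longrightarrow> psi x \<le> psi y"
proof (rule DERIV_nonneg_imp_nondecreasing[of x y psi])
  fix t
  assume "x \<le> t" "t \<le> y" "1 \<le> x"
  then show "\<exists>y. DERIV psi t :> y \<and> 0 \<le> y"
    using psi_has_real_derivative[of t] by (intro exI[of _ "1 - 1/t"]) (auto simp: field_simps)
qed

lemma psi_antimono_le_1: "0 < x \<Longrightarrow> x \<le> y \<Longrightarrow> y \<le> 1 \<Longrightarrow> psi y \<le> psi x"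
proof (rule DERIV_nonpos_imp_nonincreasing[of x y psi])
  fix t
  assume "x \<le> t" "t \<le> y" "0 < x" "y \<le> 1"
  then show "\<exists>y. DERIV psi t :> y \<and> y \<le> 0"
    using psi_has_real_derivative[of t] by (intro exI[of _ "1 - 1/t"]) (auto simp: field_simps)
qed

lemma psi_bounded_below_away_from_1:
  assumes "0 < d" "d < 1"
  obtains c where "c > 0" "\<And>z. z > 0 \<Longrightarrow> d \<le> \<bar>z - 1\<bar> \<Longrightarrow> c \<le> psi z"
proof
  show "min (psi (1 - d)) (psi (1 + d)) > 0"
    using assms psi_pos[of "1 - d"] psi_pos[of "1 + d"] by auto
  fix z :: real
  assume "z > 0" "d \<le> \<bar>z - 1\<bar>"
  then consider "1 + d \<le> z" | "z \<le> 1 - d"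
    by linarith
  then show "min (psi (1 - d)) (psi (1 + d)) \<le> psi z"
  proof cases
    case 1
    then show ?thesis
      using psi_mono_ge_1[of "1 + d" z] assms by simp
  next
    case 2
    then show ?thesis
      using psi_antimono_le_1[of z "1 - d"] \<open>z > 0\<close> assms by simp
  qed
qed

lemma exp_uminus_psi: "z > 0 \<Longrightarrow> exp (- psi z) = z * exp (1 - z)"
  unfolding psi_def by (simp add: exp_diff exp_minus exp_add field_simps)

lemma exp_uminus_times_psi_le: "z > 0 \<Longrightarrow> n \<ge> 1 \<Longrightarrow> exp (- n * psi z) \<le> exp (- psi z)"
  using psi_nonneg[of z] by (simp add: mult_le_cancel_right1)

lemma powr_times_exp_eq_exp_psi:
  assumes "t > -1" "\<rho> > 0"
  shows "(1 + t) powr n * exp (- (n * \<rho>) * t) = exp (n * psi \<rho>) * exp (- n * psi (\<rho> * (1 + t)))"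
proof -
  have "ln (\<rho> * (1 + t)) = ln \<rho> + ln (1 + t)"
    using assms by (simp add: ln_mult)
  then have "n * psi \<rho> + (- n * psi (\<rho> * (1 + t))) = n * ln (1 + t) + (- (n * \<rho>) * t)"
    unfolding psi_def by (simp add: algebra_simps)
  then show ?thesis
    using assms by (simp add: powr_def flip: exp_add)
qed

text \<open>
  \<open>psi_root z = sgn (z - 1) * sqrt (2 * psi z)\<close>, written as \<open>z - 1\<close> times the ratio
  \<open>psi_ratio\<close>, which is continuous across \<open>z = 1\<close>.
\<close>

definition psi_ratio :: "real \<Rightarrow> real" where
  "psi_ratio z = (if z = 1 then 1 else sqrt (2 * psi z / (z - 1)\<^sup>2))"

definition psi_root :: "real \<Rightarrow> real" where
  "psi_root z = (z - 1) * psi_ratio z"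

definition psi_root_deriv :: "real \<Rightarrow> real" where
  "psi_root_deriv z = 1 / (z * psi_ratio z)"

lemma psi_ratio_pos: "z > 0 \<Longrightarrow> psi_ratio z > 0"
  unfolding psi_ratio_def using psi_pos[of z] by auto

lemma psi_ratio_tendsto_1: "(psi_ratio \<longlongrightarrow> 1) (at 1)"
proof -
  have "((\<lambda>z::real. sqrt (2 * (z - 1 - ln z) / (z - 1)\<^sup>2)) \<longlongrightarrow> 1) (at 1)"
    by real_asymp
  moreover have "eventually (\<lambda>z. psi_ratio z = sqrt (2 * (z - 1 - ln z) / (z - 1)\<^sup>2)) (at 1)"
    by (auto simp: eventually_at_filter psi_ratio_def psi_def)
  ultimately show ?thesis
    by (simp add: tendsto_cong)
qed

lemma isCont_psi_ratio: "z > 0 \<Longrightarrow> isCont psi_ratio z"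
proof (cases "z = 1")
  case True
  then show ?thesis
    using psi_ratio_tendsto_1 by (simp add: isCont_def psi_ratio_def)
next
  case False
  assume "z > 0"
  have "eventually (\<lambda>y. y \<noteq> 1) (nhds z)"
    using False by (intro t1_space_nhds)
  then have "eventually (\<lambda>y. psi_ratio y = sqrt (2 * (y - 1 - ln y) / (y - 1)\<^sup>2)) (nhds z)"
    by eventually_elim (simp add: psi_ratio_def psi_def)
  moreover have "isCont (\<lambda>y. sqrt (2 * (y - 1 - ln y) / (y - 1)\<^sup>2)) z"
    using False \<open>z > 0\<close> by (intro continuous_intros) auto
  ultimately show ?thesis
    by (subst isCont_cong)
qed

lemma psi_root_deriv_pos: "z > 0 \<Longrightarrow> psi_root_deriv z > 0"
  unfolding psi_root_deriv_def using psi_ratio_pos[of z] by simp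

lemma isCont_psi_root_deriv: "z > 0 \<Longrightarrow> isCont psi_root_deriv z"
  unfolding psi_root_deriv_def[abs_def] using psi_ratio_pos[of z] isCont_psi_ratio[of z]
  by (intro continuous_intros) auto

lemma psi_root_deriv_1 [simp]: "psi_root_deriv 1 = 1"
  by (simp add: psi_root_deriv_def psi_ratio_def)

lemma psi_root_squared: "z > 0 \<Longrightarrow> (psi_root z)\<^sup>2 = 2 * psi z"
  unfolding psi_root_def psi_ratio_def using psi_nonneg[of z]
  by (auto simp: power_mult_distrib psi_def)

lemma psi_root_less_1:
  assumes "z < 1"
  shows "psi_root z = - sqrt (2 * psi z)"
proof -
  have "sqrt (2 * psi z / (z - 1)\<^sup>2) = sqrt (2 * psi z) / (1 - z)"
    using assms by (simp add: real_sqrt_divide power2_commute)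
  then show ?thesis
    using assms unfolding psi_root_def psi_ratio_def by (simp add: field_simps)
qed

lemma psi_root_ge_1:
  assumes "1 \<le> z"
  shows "psi_root z = sqrt (2 * psi z)"
proof (cases "z = 1")
  case False
  then have "sqrt (2 * psi z / (z - 1)\<^sup>2) = sqrt (2 * psi z) / (z - 1)"
    using assms by (simp add: real_sqrt_divide)
  then show ?thesis
    using False assms unfolding psi_root_def psi_ratio_def by (simp add: field_simps)
qed (simp add: psi_root_def psi_ratio_def psi_def)

lemma psi_root_has_real_derivative_off_1:
  assumes "z > 0" "z \<noteq> 1"
  shows "(psi_root has_real_derivative psi_root_deriv z) (at z)"
proof -
  define \<sigma> where "\<sigma> = sgn (z - 1)"
  have \<sigma>: "\<bar>\<sigma>\<bar> = 1" "\<sigma> * (z - 1) = \<bar>z - 1\<bar>"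
    using assms by (auto simp: \<sigma>_def sgn_if)
  have "eventually (\<lambda>y. y \<in> (if z < 1 then {0<..<1} else {1<..})) (nhds z)"
    using assms by (intro eventually_nhds_in_open) auto
  then have ev: "eventually (\<lambda>y. \<sigma> * sqrt (2 * psi y) = psi_root y) (nhds z)"
    by eventually_elim (use assms in \<open>auto simp: \<sigma>_def psi_root_less_1 psi_root_ge_1 split: if_splits\<close>)
  have p: "sqrt (2 * psi z) > 0"
    using psi_pos[OF assms] by simp
  have deriv: "((\<lambda>y. \<sigma> * sqrt (2 * psi y)) has_real_derivative
      \<sigma> * ((1 - 1/z) / sqrt (2 * psi z))) (at z)"
    using p by (auto intro!: derivative_eq_intros psi_has_real_derivative assms(1)
        simp: field_simps)
  have eq: "\<sigma> * ((1 - 1/z) / sqrt (2 * psi z)) = psi_root_deriv z"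
  proof -
    have "\<sigma> * ((1 - 1/z) / sqrt (2 * psi z)) = \<sigma> * (z - 1) / (z * sqrt (2 * psi z))"
      using assms(1) by (simp add: field_simps)
    also have "\<dots> = \<bar>z - 1\<bar> / (z * sqrt (2 * psi z))"
      by (simp only: \<sigma>(2))
    also have "\<dots> = psi_root_deriv z"
      using assms by (simp add: psi_root_deriv_def psi_ratio_def real_sqrt_divide)
    finally show ?thesis .
  qed
  show ?thesis
    using DERIV_cong_ev[OF refl ev eq] deriv by (rule iffD1)
qed

lemma psi_root_has_real_derivative:
  assumes "z > 0"
  shows "(psi_root has_real_derivative psi_root_deriv z) (at z)"
proof (cases "z = 1")
  case True
  have "eventually (\<lambda>y. psi_ratio y = (psi_root y - psi_root 1) / (y - 1)) (at 1)"
    by (auto simp: eventually_at_filter psi_root_def)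
  then have "((\<lambda>y. (psi_root y - psi_root 1) / (y - 1)) \<longlongrightarrow> 1) (at 1)"
    using psi_ratio_tendsto_1 by (simp add: tendsto_cong)
  then show ?thesis
    using True by (simp add: has_field_derivative_iff)
qed (use assms psi_root_has_real_derivative_off_1 in auto)

lemma psi_root_at_top: "filterlim psi_root at_top at_top"
proof -
  have "filterlim (\<lambda>z::real. sqrt (2 * (z - 1 - ln z))) at_top at_top"
    by real_asymp
  moreover have "eventually (\<lambda>z. sqrt (2 * (z - 1 - ln z)) = psi_root z) at_top"
    using eventually_ge_at_top[of 1] by eventually_elim (simp add: psi_root_ge_1 psi_def)
  ultimately show ?thesis
    using filterlim_cong by fastforce
qed

lemma psi_root_deriv_close_to_inverse:
  assumes "e > 0"
  obtains d where "d > 0" "\<And>z. \<bar>z - 1\<bar> < d \<Longrightarrow> \<bar>1/z - psi_root_deriv z\<bar> \<le> e * psi_root_deriv z"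
proof -
  have "isCont (\<lambda>z. 1/z - psi_root_deriv z) 1" "isCont psi_root_deriv 1"
    using isCont_psi_root_deriv[of 1] by (auto intro!: continuous_intros)
  then have lim: "((\<lambda>z. 1/z - psi_root_deriv z) \<longlongrightarrow> 0) (at 1)" "(psi_root_deriv \<longlongrightarrow> 1) (at 1)"
    by (simp_all add: isCont_def)
  have "eventually (\<lambda>z. \<bar>1/z - psi_root_deriv z\<bar> < e/2) (at 1)"
    using order_tendstoD(2)[OF tendsto_rabs[OF lim(1)], of "e/2"] assms by simp
  moreover have "eventually (\<lambda>z. e/2 < e * psi_root_deriv z) (at 1)"
    using order_tendstoD(1)[OF tendsto_mult_left[OF lim(2), of e], of "e/2"] assms by simp
  ultimately have "eventually (\<lambda>z. \<bar>1/z - psi_root_deriv z\<bar> \<le> e * psi_root_deriv z) (at 1)"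
    by eventually_elim simp
  then obtain d where "d > 0"
    and d: "\<And>z. z \<noteq> 1 \<Longrightarrow> dist z 1 < d \<Longrightarrow> \<bar>1/z - psi_root_deriv z\<bar> \<le> e * psi_root_deriv z"
    unfolding eventually_at by blast
  show ?thesis
  proof (rule that[OF \<open>d > 0\<close>])
    fix z :: real
    assume "\<bar>z - 1\<bar> < d"
    then show "\<bar>1/z - psi_root_deriv z\<bar> \<le> e * psi_root_deriv z"
      using d[of z] assms by (cases "z = 1") (auto simp: dist_real_def)
  qed
qed

lemma set_integral_Ioi_FTC:
  fixes f F :: "real \<Rightarrow> real"
  assumes deriv: "\<And>t. 0 < t \<Longrightarrow> (F has_real_derivative f t) (at t)"
    and cont: "\<And>t. 0 < t \<Longrightarrow> isCont f t"
    and "set_integrable lborel {0<..} f" and "isCont F 0" and "(F \<longlongrightarrow> L) at_top"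
  shows "(LBINT t:{0<..}. f t) = L - F 0"
proof -
  have "((F \<circ> real_of_ereal) \<longlongrightarrow> F 0) (at_right 0)"
    using \<open>isCont F 0\<close>
    by (simp add: isCont_def filterlim_at_split zero_ereal_def ereal_tendsto_simps)
  moreover have "((F \<circ> real_of_ereal) \<longlongrightarrow> L) (at_left \<infinity>)"
    using \<open>(F \<longlongrightarrow> L) at_top\<close> by (simp add: ereal_tendsto_simps)
  moreover have "set_integrable lborel (einterval 0 \<infinity>) f"
    using \<open>set_integrable lborel {0<..} f\<close> by (simp add: zero_ereal_def)
  ultimately have "(LBINT t=0..\<infinity>. f t) = L - F 0"
    using interval_integral_FTC_integrable[of 0 \<infinity> F f] deriv cont
    by (auto simp: zero_ereal_def has_real_derivative_iff_has_vector_derivative[symmetric])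
  then show ?thesis
    by (simp add: interval_lebesgue_integral_0_infty)
qed

lemma set_integral_Ioi_FTC_nonneg:
  fixes f F :: "real \<Rightarrow> real"
  assumes deriv: "\<And>t. 0 < t \<Longrightarrow> (F has_real_derivative f t) (at t)"
    and cont: "\<And>t. 0 < t \<Longrightarrow> isCont f t"
    and nonneg: "\<And>t. 0 < t \<Longrightarrow> 0 \<le> f t"
    and "isCont F 0" and "(F \<longlongrightarrow> L) at_top"
  shows "set_integrable lborel {0<..} f" "(LBINT t:{0<..}. f t) = L - F 0"
proof -
  have "((F \<circ> real_of_ereal) \<longlongrightarrow> F 0) (at_right 0)"
    using \<open>isCont F 0\<close>
    by (simp add: isCont_def filterlim_at_split zero_ereal_def ereal_tendsto_simps)
  moreover have "((F \<circ> real_of_ereal) \<longlongrightarrow> L) (at_left \<infinity>)"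
    using \<open>(F \<longlongrightarrow> L) at_top\<close> by (simp add: ereal_tendsto_simps)
  moreover have "AE x in lborel. 0 < ereal x \<longrightarrow> ereal x < \<infinity> \<longrightarrow> 0 \<le> f x"
    using nonneg by (intro AE_I2) simp
  ultimately have "set_integrable lborel (einterval 0 \<infinity>) f"
    using interval_integral_FTC_nonneg[of 0 \<infinity> F f] deriv cont by (auto simp: zero_ereal_def)
  then show "set_integrable lborel {0<..} f"
    by (simp add: zero_ereal_def)
  then show "(LBINT t:{0<..}. f t) = L - F 0"
    using set_integral_Ioi_FTC[OF deriv cont] assms(4,5) by blast
qed

lemma
  fixes \<rho> :: real
  assumes "\<rho> > 0"
  shows set_integrable_exp_affine: "set_integrable lborel {0<..} (\<lambda>t. \<rho> * exp (1 - \<rho> * (1 + t)))"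
    and set_integral_exp_affine: "(LBINT t:{0<..}. \<rho> * exp (1 - \<rho> * (1 + t))) = exp (1 - \<rho>)"
proof -
  have lim: "((\<lambda>t. - exp (1 - \<rho> * (1 + t))) \<longlongrightarrow> 0) at_top"
    using assms by real_asymp
  note FTC = set_integral_Ioi_FTC_nonneg[OF _ _ _ _ lim]
  show "set_integrable lborel {0<..} (\<lambda>t. \<rho> * exp (1 - \<rho> * (1 + t)))"
    by (rule FTC(1)) (use assms in \<open>auto intro!: derivative_eq_intros continuous_intros\<close>)
  have "(LBINT t:{0<..}. \<rho> * exp (1 - \<rho> * (1 + t))) = 0 - (- exp (1 - \<rho> * (1 + 0)))"
    by (rule FTC(2)) (use assms in \<open>auto intro!: derivative_eq_intros continuous_intros\<close>)
  then show "(LBINT t:{0<..}. \<rho> * exp (1 - \<rho> * (1 + t))) = exp (1 - \<rho>)"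
    by simp
qed

lemma set_integrable_times_exp_affine:
  fixes \<rho> :: real
  assumes "\<rho> > 0"
  shows "set_integrable lborel {0<..} (\<lambda>t. (1 + t) * exp (1 - \<rho> * (1 + t)))"
proof -
  let ?F = "\<lambda>t. - (1 + t) * exp (1 - \<rho> * (1 + t)) / \<rho> - exp (1 - \<rho> * (1 + t)) / \<rho>\<^sup>2"
  have "(?F has_real_derivative (1 + t) * exp (1 - \<rho> * (1 + t))) (at t)" for t
    using assms by (auto intro!: derivative_eq_intros simp: field_simps power2_eq_square)
  moreover have "(?F \<longlongrightarrow> 0) at_top"
    using assms by real_asymp
  ultimately show ?thesis
    using assms by (intro set_integral_Ioi_FTC_nonneg(1)[where F = ?F]) (auto intro!: continuous_intros)
qed

lemma set_integrable_continuous_bound: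
  fixes f g :: "real \<Rightarrow> real"
  assumes "set_integrable lborel {0<..} g" "\<And>t. t > 0 \<Longrightarrow> isCont f t"
    and "\<And>t. t > 0 \<Longrightarrow> \<bar>f t\<bar> \<le> g t"
  shows "set_integrable lborel {0<..} f"
proof (rule set_integrable_bound[OF assms(1)])
  have "continuous_on {0<..} f"
    using assms(2) by (intro continuous_at_imp_continuous_on) auto
  then show "set_borel_measurable lborel {0<..} f"
    unfolding set_borel_measurable_def
    using borel_measurable_continuous_on_indicator[of "{0<..}" f] by simp
  show "AE x in lborel. x \<in> {0<..} \<longrightarrow> norm (f x) \<le> norm (g x)"
    using assms(3) by (intro AE_I2) force
qed

definition J_gauss :: "real \<Rightarrow> real \<Rightarrow> real" where
  "J_gauss n \<rho> = (LBINT t:{0<..}. exp (- n * psi (\<rho> * (1 + t))) * (\<rho> * psi_root_deriv (\<rho> * (1 + t))))"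

definition J_erlang :: "real \<Rightarrow> real \<Rightarrow> real" where
  "J_erlang n \<rho> = (LBINT t:{0<..}. exp (- n * psi (\<rho> * (1 + t))) / (1 + t))"

text \<open>
  The substitution \<open>x = - sqrt n * psi_root (\<rho> * (1 + t))\<close> turns \<open>J_gauss\<close> into a normal
  integral.
\<close>

lemma Phi_psi_root_tendsto_0:
  assumes "n > 0" "\<rho> > 0"
  shows "((\<lambda>t. Phi (- (sqrt n * psi_root (\<rho> * (1 + t))))) \<longlongrightarrow> 0) at_top"
proof -
  have "filterlim (\<lambda>t. \<rho> * (1 + t)) at_top at_top"
    using assms by real_asymp
  then have "filterlim (\<lambda>t. sqrt n * psi_root (\<rho> * (1 + t))) at_top at_top"
    using assms psi_root_at_top filterlim_compose
    by (intro filterlim_tendsto_pos_mult_at_top[OF tendsto_const]) auto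
  then show ?thesis
    using Phi_tendsto_at_bot filterlim_compose filterlim_uminus_at_top by blast
qed

lemma
  fixes n \<rho> :: real
  assumes n: "n > 0" and \<rho>: "0 < \<rho>" "\<rho> < 1"
  shows set_integrable_J_gauss:
      "set_integrable lborel {0<..} (\<lambda>t. exp (- n * psi (\<rho> * (1 + t))) * (\<rho> * psi_root_deriv (\<rho> * (1 + t))))"
    and J_gauss_eq: "J_gauss n \<rho> = sqrt (2 * pi) / sqrt n * Phi (sqrt n * sqrt (2 * psi \<rho>))"
proof -
  define c where "c = sqrt (2 * pi) / sqrt n"
  define F where "F = (\<lambda>t. - c * Phi (- (sqrt n * psi_root (\<rho> * (1 + t)))))"
  define f where "f = (\<lambda>t. exp (- n * psi (\<rho> * (1 + t))) * (\<rho> * psi_root_deriv (\<rho> * (1 + t))))"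
  have deriv: "(F has_real_derivative f t) (at t)" if "t > -1" for t
  proof -
    have z: "\<rho> * (1 + t) > 0"
      using that \<rho> by simp
    have "phi (- (sqrt n * psi_root (\<rho> * (1 + t)))) = exp (- n * psi (\<rho> * (1 + t))) / sqrt (2 * pi)"
      using psi_root_squared[OF z] n by (intro phi_eq_exp_psi) (simp add: power_mult_distrib)
    moreover have "((\<lambda>t. psi_root (\<rho> * (1 + t))) has_real_derivative
        psi_root_deriv (\<rho> * (1 + t)) * \<rho>) (at t)"
      by (rule DERIV_chain2[where g = "\<lambda>t. \<rho> * (1 + t)", OF psi_root_has_real_derivative[OF z]])
        (auto intro!: derivative_eq_intros)
    ultimately show ?thesis
      unfolding F_def f_def c_def using n
      by (auto intro!: derivative_eq_intros DERIV_chain2[OF Phi_has_real_derivative]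
          simp: field_simps)
  qed
  have "isCont f t" if "t > 0" for t
    unfolding f_def psi_def using that \<rho>
    by (auto intro!: continuous_intros isCont_o2[OF _ isCont_psi_root_deriv])
  moreover have "f t \<ge> 0" if "t > 0" for t
    unfolding f_def using psi_root_deriv_pos[of "\<rho> * (1 + t)"] that \<rho> by simp
  moreover have "isCont F 0"
    using deriv[of 0] DERIV_isCont by simp
  moreover have "(F \<longlongrightarrow> 0) at_top"
    using tendsto_mult_left[OF Phi_psi_root_tendsto_0[OF n \<rho>(1)], of "- c"] by (simp add: F_def)
  ultimately have "set_integrable lborel {0<..} f" "(LBINT t:{0<..}. f t) = 0 - F 0"
    using set_integral_Ioi_FTC_nonneg[of F f] deriv by auto
  then show "set_integrable lborel {0<..} f"
    and "J_gauss n \<rho> = sqrt (2 * pi) / sqrt n * Phi (sqrt n * sqrt (2 * psi \<rho>))"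
    unfolding J_gauss_def f_def[symmetric] using psi_root_less_1[OF \<rho>(2)]
    by (simp_all add: F_def c_def)
qed

lemma J_gauss_ge:
  assumes "n > 0" "0 < \<rho>" "\<rho> < 1"
  shows "sqrt (2 * pi) * Phi 0 / sqrt n \<le> J_gauss n \<rho>"
  using Phi_mono[of 0 "sqrt n * sqrt (2 * psi \<rho>)"] psi_nonneg[of \<rho>] assms
  by (simp add: J_gauss_eq divide_right_mono)

lemma set_integrable_J_erlang:
  assumes "n \<ge> 1" "\<rho> > 0"
  shows "set_integrable lborel {0<..} (\<lambda>t. exp (- n * psi (\<rho> * (1 + t))) / (1 + t))"
proof (rule set_integrable_continuous_bound[OF set_integrable_exp_affine[OF assms(2)]])
  fix t :: real
  assume "t > 0"
  then have z: "\<rho> * (1 + t) > 0"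
    using assms by simp
  then show "isCont (\<lambda>t. exp (- n * psi (\<rho> * (1 + t))) / (1 + t)) t"
    using \<open>t > 0\<close> unfolding psi_def by (intro continuous_intros) auto
  have "exp (- n * psi (\<rho> * (1 + t))) / (1 + t) \<le> exp (- psi (\<rho> * (1 + t))) / (1 + t)"
    using exp_uminus_times_psi_le[OF z assms(1)] \<open>t > 0\<close> by (intro divide_right_mono) auto
  then show "\<bar>exp (- n * psi (\<rho> * (1 + t))) / (1 + t)\<bar> \<le> \<rho> * exp (1 - \<rho> * (1 + t))"
    using exp_uminus_psi[OF z] \<open>t > 0\<close> by simp
qed

lemma J_erlang_1:
  assumes "\<rho> > 0"
  shows "J_erlang 1 \<rho> = exp (1 - \<rho>)"
proof -
  have "exp (- psi (\<rho> * (1 + t))) / (1 + t) = \<rho> * exp (1 - \<rho> * (1 + t))" if "t > 0" for t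
    using exp_uminus_psi[of "\<rho> * (1 + t)"] assms that by simp
  then have "J_erlang 1 \<rho> = (LBINT t:{0<..}. \<rho> * exp (1 - \<rho> * (1 + t)))"
    unfolding J_erlang_def by (intro set_lebesgue_integral_cong) auto
  then show ?thesis
    using set_integral_exp_affine[OF assms] by simp
qed

lemma J_erlang_nonneg: "J_erlang n \<rho> \<ge> 0"
  unfolding J_erlang_def set_lebesgue_integral_def
  by (intro Bochner_Integration.integral_nonneg) (auto simp: indicator_def)

lemma J_erlang_1_plus_J_gauss_1_le:
  assumes "0 < \<rho>" "\<rho> < 1"
  shows "J_erlang 1 \<rho> + J_gauss 1 \<rho> \<le> exp 1 + sqrt (2 * pi)"
  using assms Phi_le_1 by (simp add: J_erlang_1 J_gauss_eq add_mono)

text \<open>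
  Near \<open>z = 1\<close> the integrands of \<open>J_erlang\<close> and \<open>J_gauss\<close> (with \<open>z = \<rho>(1 + t)\<close>) differ by
  the factor \<open>1/z\<close> versus \<open>psi_root_deriv z\<close>; away from \<open>1\<close> the factor
  \<open>exp (- (n - 1) * psi z)\<close> is uniformly small.
\<close>

lemma laplace_pointwise_bound:
  fixes n z c d e :: real
  assumes "z > 0" "n \<ge> 1" "e \<ge> 0"
    and near: "\<bar>z - 1\<bar> < d \<Longrightarrow> \<bar>1/z - psi_root_deriv z\<bar> \<le> e * psi_root_deriv z"
    and far: "d \<le> \<bar>z - 1\<bar> \<Longrightarrow> c \<le> psi z"
  shows "exp (- n * psi z) * \<bar>1/z - psi_root_deriv z\<bar>
    \<le> e * (exp (- n * psi z) * psi_root_deriv z)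
      + exp (- (n - 1) * c) * (exp (- psi z) * (1/z + psi_root_deriv z))"
proof -
  have s: "psi_root_deriv z > 0" "1/z > 0"
    using psi_root_deriv_pos assms(1) by auto
  show ?thesis
  proof (cases "\<bar>z - 1\<bar> < d")
    case True
    then have "exp (- n * psi z) * \<bar>1/z - psi_root_deriv z\<bar> \<le> e * (exp (- n * psi z) * psi_root_deriv z)"
      using near by (simp add: mult_left_mono)
    moreover have "0 \<le> exp (- (n - 1) * c) * (exp (- psi z) * (1/z + psi_root_deriv z))"
      using s by simp
    ultimately show ?thesis
      by linarith
  next
    case False
    then have "exp (- n * psi z) = exp (- (n - 1) * psi z) * exp (- psi z)"
      by (simp add: algebra_simps flip: exp_add)
    also have "\<dots> \<le> exp (- (n - 1) * c) * exp (- psi z)"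
      using far False assms(2) by (intro mult_right_mono) (auto simp: mult_le_cancel_left)
    finally have "exp (- n * psi z) * \<bar>1/z - psi_root_deriv z\<bar>
        \<le> exp (- (n - 1) * c) * exp (- psi z) * (1/z + psi_root_deriv z)"
      using s by (intro mult_mono) (auto simp: abs_le_iff)
    moreover have "0 \<le> e * (exp (- n * psi z) * psi_root_deriv z)"
      using s assms(3) by simp
    ultimately show ?thesis
      by (simp add: mult.assoc)
  qed
qed

lemma J_erlang_J_gauss_diff_le:
  assumes n: "n \<ge> 1" and \<rho>: "0 < \<rho>" "\<rho> < 1" and "e \<ge> 0"
    and near: "\<And>z. \<bar>z - 1\<bar> < d \<Longrightarrow> \<bar>1/z - psi_root_deriv z\<bar> \<le> e * psi_root_deriv z"
    and far: "\<And>z. z > 0 \<Longrightarrow> d \<le> \<bar>z - 1\<bar> \<Longrightarrow> c \<le> psi z"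
  shows "\<bar>J_erlang n \<rho> - J_gauss n \<rho>\<bar>
    \<le> e * J_gauss n \<rho> + exp (- (n - 1) * c) * (J_erlang 1 \<rho> + J_gauss 1 \<rho>)"
proof -
  define z where "z = (\<lambda>t. \<rho> * (1 + t))"
  define A where "A = (\<lambda>m t. exp (- m * psi (z t)) * (\<rho> * psi_root_deriv (z t)))"
  define B where "B = (\<lambda>m t. exp (- m * psi (z t)) / (1 + t))"
  have int: "set_integrable lborel {0<..} (A m)" "set_integrable lborel {0<..} (B m)" if "m \<ge> 1" for m
    using set_integrable_J_gauss[of m \<rho>] set_integrable_J_erlang[of m \<rho>] that \<rho>
    by (simp_all add: A_def B_def z_def)
  have J: "J_gauss m \<rho> = (LBINT t:{0<..}. A m t)" "J_erlang m \<rho> = (LBINT t:{0<..}. B m t)" for m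
    by (simp_all add: J_gauss_def J_erlang_def A_def B_def z_def)
  have pointwise: "\<bar>B n t - A n t\<bar>
      \<le> e * A n t + exp (- (n - 1) * c) * (B 1 t + A 1 t)" if "t > 0" for t
  proof -
    have zt: "z t > 0"
      using that \<rho> by (simp add: z_def)
    have B: "B m t = \<rho> * (exp (- m * psi (z t)) * (1 / z t))" for m
      using \<rho> by (simp add: B_def z_def)
    have "B n t - A n t = \<rho> * (exp (- n * psi (z t)) * (1 / z t - psi_root_deriv (z t)))"
      by (simp add: A_def B algebra_simps)
    then have "\<bar>B n t - A n t\<bar> = \<rho> * (exp (- n * psi (z t)) * \<bar>1 / z t - psi_root_deriv (z t)\<bar>)"
      using \<rho> by (simp add: abs_mult)
    also have "\<dots> \<le> \<rho> * (e * (exp (- n * psi (z t)) * psi_root_deriv (z t))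
        + exp (- (n - 1) * c) * (exp (- psi (z t)) * (1 / z t + psi_root_deriv (z t))))"
      using laplace_pointwise_bound[OF zt n \<open>e \<ge> 0\<close> near far[OF zt]] \<rho> by simp
    also have "\<dots> = e * A n t + exp (- (n - 1) * c) * (B 1 t + A 1 t)"
      unfolding A_def B by (simp add: algebra_simps)
    finally show ?thesis .
  qed
  have "\<bar>J_erlang n \<rho> - J_gauss n \<rho>\<bar> = \<bar>LBINT t:{0<..}. B n t - A n t\<bar>"
    using int n by (simp add: J set_integral_diff)
  also have "\<dots> \<le> (LBINT t:{0<..}. \<bar>B n t - A n t\<bar>)"
    using set_integral_norm_bound[of lborel "{0<..}" "\<lambda>t. B n t - A n t"] int n
    by (simp add: set_integral_diff)
  also have "\<dots> \<le> (LBINT t:{0<..}. e * A n t + exp (- (n - 1) * c) * (B 1 t + A 1 t))"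
    using pointwise int n
    by (intro set_integral_mono set_integrable_abs set_integral_diff set_integral_add
        set_integrable_mult_right) auto
  also have "\<dots> = e * J_gauss n \<rho> + exp (- (n - 1) * c) * (J_erlang 1 \<rho> + J_gauss 1 \<rho>)"
    using int n by (simp add: J set_integral_add set_integrable_mult_right)
  finally show ?thesis .
qed

lemma J_erlang_close_J_gauss:
  assumes e: "e > 0"
  shows "eventually (\<lambda>n. \<forall>\<rho>. 0 < \<rho> \<longrightarrow> \<rho> < 1 \<longrightarrow>
    \<bar>J_erlang n \<rho> - J_gauss n \<rho>\<bar> \<le> e * J_gauss n \<rho>) at_top"
proof -
  obtain d0 where "d0 > 0"
    and d0: "\<And>z. \<bar>z - 1\<bar> < d0 \<Longrightarrow> \<bar>1/z - psi_root_deriv z\<bar> \<le> e/2 * psi_root_deriv z"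
    using psi_root_deriv_close_to_inverse[of "e/2"] e by auto
  define d where "d = min d0 (1/2)"
  have near: "\<bar>1/z - psi_root_deriv z\<bar> \<le> e/2 * psi_root_deriv z" if "\<bar>z - 1\<bar> < d" for z
    using d0 that by (simp add: d_def)
  have "0 < d" "d < 1"
    using \<open>d0 > 0\<close> by (auto simp: d_def)
  then obtain c where "c > 0" and far: "\<And>z. z > 0 \<Longrightarrow> d \<le> \<bar>z - 1\<bar> \<Longrightarrow> c \<le> psi z"
    using psi_bounded_below_away_from_1 by blast
  define M where "M = exp 1 + sqrt (2 * pi)"
  have "((\<lambda>n::real. exp (- (n - 1) * c) * sqrt n * M) \<longlongrightarrow> 0) at_top"
    using \<open>c > 0\<close> by real_asymp
  then have "eventually (\<lambda>n. exp (- (n - 1) * c) * sqrt n * M < e/2 * (sqrt (2 * pi) * Phi 0)) at_top"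
    using e Phi_0_pos by (intro order_tendstoD) auto
  with eventually_ge_at_top[of 1] show ?thesis
  proof eventually_elim
    case (elim n)
    have tail: "exp (- (n - 1) * c) * (J_erlang 1 \<rho> + J_gauss 1 \<rho>) \<le> e/2 * J_gauss n \<rho>"
      if \<rho>: "0 < \<rho>" "\<rho> < 1" for \<rho>
    proof -
      have "exp (- (n - 1) * c) * (J_erlang 1 \<rho> + J_gauss 1 \<rho>) \<le> exp (- (n - 1) * c) * M"
        unfolding M_def using J_erlang_1_plus_J_gauss_1_le[OF \<rho>] by simp
      also have "\<dots> \<le> e/2 * (sqrt (2 * pi) * Phi 0 / sqrt n)"
        using elim by (simp add: field_simps)
      also have "\<dots> \<le> e/2 * J_gauss n \<rho>"
        using J_gauss_ge[of n \<rho>] elim \<rho> e by (intro mult_left_mono) auto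
      finally show ?thesis .
    qed
    show ?case
      using J_erlang_J_gauss_diff_le[OF elim(1) _ _ _ near far] tail e by fastforce
  qed
qed

lemma set_integrable_powr_times_exp:
  fixes n m lam :: real
  assumes n: "1 \<le> n" and "m \<le> n" and lam: "0 < lam"
  shows "set_integrable lborel {0<..} (\<lambda>t. (1 + t) powr m * exp (- lam * t))"
proof (rule set_integrable_continuous_bound)
  define \<rho> where "\<rho> = lam / n"
  define K where "K = exp (n * psi \<rho>)"
  have \<rho>: "\<rho> > 0" "lam = n * \<rho>"
    using n lam by (simp_all add: \<rho>_def)
  show "set_integrable lborel {0<..} (\<lambda>t. K * \<rho> * ((1 + t) * exp (1 - \<rho> * (1 + t))))"
    using set_integrable_times_exp_affine[OF \<rho>(1)] by (rule set_integrable_mult_right)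
  fix t :: real
  assume "t > 0"
  then have z: "\<rho> * (1 + t) > 0"
    using \<rho> by simp
  show "isCont (\<lambda>t. (1 + t) powr m * exp (- lam * t)) t"
    using \<open>t > 0\<close> by (intro continuous_intros) auto
  have "(1 + t) powr m * exp (- lam * t) \<le> (1 + t) powr n * exp (- lam * t)"
    using \<open>t > 0\<close> \<open>m \<le> n\<close> by (intro mult_right_mono powr_mono) auto
  also have "\<dots> = K * exp (- n * psi (\<rho> * (1 + t)))"
    unfolding K_def \<rho>(2) using powr_times_exp_eq_exp_psi[of t \<rho> n] \<open>t > 0\<close> \<rho>(1) by simp
  also have "\<dots> \<le> K * exp (- psi (\<rho> * (1 + t)))"
    using exp_uminus_times_psi_le[OF z n] by (simp add: K_def)
  also have "\<dots> = K * \<rho> * ((1 + t) * exp (1 - \<rho> * (1 + t)))"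
    using exp_uminus_psi[OF z] by simp
  finally show "\<bar>(1 + t) powr m * exp (- lam * t)\<bar> \<le> K * \<rho> * ((1 + t) * exp (1 - \<rho> * (1 + t)))"
    by simp
qed

text \<open>
  Integration by parts against \<open>d/dt ((1 + t) powr n * exp (- lam * t))\<close>; the boundary term
  at \<open>0\<close> produces the \<open>1\<close>.
\<close>

lemma erlang_integral_by_parts:
  fixes n lam :: real
  assumes n: "1 \<le> n" and lam: "0 < lam"
  shows "lam * (LBINT t:{0..}. t * exp (- lam * t) * (1 + t) powr (n - 1))
    = 1 + (n - lam) * (LBINT t:{0<..}. (1 + t) powr (n - 1) * exp (- lam * t))"
proof -
  define g where "g = (\<lambda>m t::real. (1 + t) powr m * exp (- lam * t))"
  have int: "set_integrable lborel {0<..} (g m)" if "m \<le> n" for m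
    unfolding g_def using set_integrable_powr_times_exp[OF n that lam] .
  define h where "h = (\<lambda>t. lam * g n t - n * g (n - 1) t)"
  have int_h: "set_integrable lborel {0<..} h"
    unfolding h_def using int by (intro set_integral_diff set_integrable_mult_right) auto
  have "(LBINT t:{0<..}. h t) = 0 - (- g n 0)"
  proof (rule set_integral_Ioi_FTC[OF _ _ int_h])
    show "((\<lambda>t. - g n t) has_real_derivative h t) (at t)" if "0 < t" for t
    proof -
      have "((\<lambda>t. - g n t) has_real_derivative - (n * (1 + t) powr (n - 1) * 1 * exp (- lam * t)
          + (1 + t) powr n * (exp (- lam * t) * (- lam * 1)))) (at t)"
        unfolding g_def using that by (intro derivative_eq_intros refl) auto
      then show ?thesis
        by (simp add: h_def g_def algebra_simps)
    qed
    show "((\<lambda>t. - g n t) \<longlongrightarrow> 0) at_top"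
      unfolding g_def using lam by real_asymp
  qed (auto simp: h_def g_def intro!: continuous_intros)
  then have "(LBINT t:{0<..}. h t) = 1"
    by (simp add: g_def)
  have "lam * (LBINT t:{0..}. t * exp (- lam * t) * (1 + t) powr (n - 1))
      = (LBINT t:{0<..}. lam * (t * exp (- lam * t) * (1 + t) powr (n - 1)))"
    unfolding set_lebesgue_integral_def
    by (subst integral_mult_right_zero[symmetric], rule Bochner_Integration.integral_cong)
      (auto simp: indicator_def)
  also have "\<dots> = (LBINT t:{0<..}. h t + (n - lam) * g (n - 1) t)"
  proof -
    have "lam * (t * exp (- lam * t) * (1 + t) powr (n - 1)) = h t + (n - lam) * g (n - 1) t"
      if "t > 0" for t
    proof -
      have "(1 + t) powr n = (1 + t) * (1 + t) powr (n - 1)"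
        using powr_mult_base[of "1 + t" "n - 1"] that by simp
      then show ?thesis
        unfolding h_def g_def by (simp add: algebra_simps)
    qed
    then show ?thesis
      by (intro set_lebesgue_integral_cong) auto
  qed
  also have "\<dots> = 1 + (n - lam) * (LBINT t:{0<..}. g (n - 1) t)"
    using int_h int \<open>(LBINT t:{0<..}. h t) = 1\<close> by (simp add: set_integral_add set_integrable_mult_right)
  finally show ?thesis
    by (simp add: g_def)
qed

lemma alpha_bar_eq:
  fixes n \<rho> :: real
  assumes n: "n \<ge> 1" and \<rho>: "0 < \<rho>" "\<rho> < 1"
  shows "alpha_bar n (n * \<rho>) = inverse (1 + (n - n * \<rho>) * (exp (n * psi \<rho>) * J_erlang n \<rho>))"
proof -
  have "(1 + t) powr (n - 1) * exp (- (n * \<rho>) * t)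
      = exp (n * psi \<rho>) * (exp (- n * psi (\<rho> * (1 + t))) / (1 + t))" if "t > 0" for t
  proof -
    have "(1 + t) powr (n - 1) * exp (- (n * \<rho>) * t) = (1 + t) powr n * exp (- (n * \<rho>) * t) / (1 + t)"
      using that by (simp add: powr_diff)
    then show ?thesis
      using powr_times_exp_eq_exp_psi[of t \<rho> n] that \<rho> by simp
  qed
  then have "(LBINT t:{0<..}. (1 + t) powr (n - 1) * exp (- (n * \<rho>) * t))
      = (LBINT t:{0<..}. exp (n * psi \<rho>) * (exp (- n * psi (\<rho> * (1 + t))) / (1 + t)))"
    by (intro set_lebesgue_integral_cong) auto
  also have "\<dots> = exp (n * psi \<rho>) * J_erlang n \<rho>"
    unfolding J_erlang_def by (rule set_integral_mult_right)
  finally have "(LBINT t:{0<..}. (1 + t) powr (n - 1) * exp (- (n * \<rho>) * t))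
      = exp (n * psi \<rho>) * J_erlang n \<rho>" .
  moreover have "inverse (1 + (n - n * \<rho>) * (exp (n * psi \<rho>) * J_erlang n \<rho>)) \<le> 1"
    using J_erlang_nonneg[of n \<rho>] \<rho> n by (simp add: inverse_le_1_iff mult_le_cancel_left1)
  ultimately show ?thesis
    unfolding alpha_bar_def using erlang_integral_by_parts[OF n, of "n * \<rho>"] \<rho> n by (simp add: min_absorb2)
qed

lemma
  fixes n \<rho> :: real
  assumes n: "n > 0" and \<rho>: "0 < \<rho>" "\<rho> < 1"
  defines "a \<equiv> sqrt (- 2 * n * (1 - \<rho> + ln \<rho>))"
  shows inverse_phi_sqrt_psi: "1 / phi a = exp (n * psi \<rho>) * sqrt (2 * pi)"
    and Phi_div_phi_sqrt_psi: "Phi a / phi a = sqrt n * (exp (n * psi \<rho>) * J_gauss n \<rho>)"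
proof -
  have "a = sqrt n * sqrt (2 * psi \<rho>)"
    unfolding a_def psi_def by (simp add: real_sqrt_mult[symmetric] algebra_simps)
  then have "a\<^sup>2 = 2 * n * psi \<rho>"
    using n psi_nonneg[OF \<rho>(1)] by (simp add: power_mult_distrib)
  then have phi_a: "phi a = exp (- n * psi \<rho>) / sqrt (2 * pi)"
    by (rule phi_eq_exp_psi)
  then show inv: "1 / phi a = exp (n * psi \<rho>) * sqrt (2 * pi)"
    by (simp add: exp_minus divide_inverse mult.commute)
  have "Phi a / phi a = Phi a * (1 / phi a)"
    by simp
  also have "\<dots> = Phi a * (exp (n * psi \<rho>) * sqrt (2 * pi))"
    by (simp only: inv)
  also have "\<dots> = sqrt n * (exp (n * psi \<rho>) * J_gauss n \<rho>)"
    unfolding J_gauss_eq[OF n \<rho>] \<open>a = sqrt n * sqrt (2 * psi \<rho>)\<close> using n by (simp add: field_simps)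
  finally show "Phi a / phi a = sqrt n * (exp (n * psi \<rho>) * J_gauss n \<rho>)" .
qed

context
  fixes lam \<beta> n :: real
  assumes lam: "1 \<le> lam" and \<beta>: "0 < \<beta>" and n: "n = lam + \<beta> * sqrt lam"
begin

lemma erlang_load: "lam < n" "1 \<le> n" "0 < lam / n" "lam / n < 1"
proof -
  have "0 < \<beta> * sqrt lam"
    using lam \<beta> by simp
  then show "lam < n" "1 \<le> n" "0 < lam / n" "lam / n < 1"
    using lam by (simp_all add: n)
qed

lemma alpha_tilde_eq:
  "alpha_tilde \<beta> lam = inverse (1 + (n - lam) * (exp (n * psi (lam / n)) * J_erlang n (lam / n)))"
  using alpha_bar_eq[of n "lam / n"] erlang_load by (simp add: alpha_tilde_def n[symmetric])

lemma UB_eq: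
  "UB \<beta> lam = inverse (1 + (n - lam) * (exp (n * psi (lam / n)) * J_gauss n (lam / n) - 1 / (3 * n)))"
proof -
  define W where "W = exp (n * psi (lam / n)) * J_gauss n (lam / n)"
  have n0: "n > 0" and sqrt_sq: "(sqrt n)\<^sup>2 = n"
    using erlang_load by auto
  have "lam / s\<^sup>2 + (s\<^sup>2 - lam) / s * (s * W + 2 / (3 * s)) = 1 + (s\<^sup>2 - lam) * (W - 1 / (3 * s\<^sup>2))"
    if "s > 0" for s :: real
    using that by (simp add: field_simps power2_eq_square)
  from this[of "sqrt n"] have "lam / n + (n - lam) / sqrt n * (sqrt n * W + 2 / (3 * sqrt n))
      = 1 + (n - lam) * (W - 1 / (3 * n))"
    using n0 by (simp add: sqrt_sq)
  then show ?thesis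
    unfolding UB_def Let_def n[symmetric] Phi_div_phi_sqrt_psi[OF n0 erlang_load(3,4)] W_def
    by simp
qed

lemma LB_eq:
  "LB \<beta> lam = inverse (1 + (n - lam) * (exp (n * psi (lam / n)) * J_gauss n (lam / n) - 1 / (3 * n)
    + exp (n * psi (lam / n)) * sqrt (2 * pi) / (sqrt n * (12 * n - 1))))"
proof -
  define W where "W = exp (n * psi (lam / n)) * J_gauss n (lam / n)"
  define P where "P = exp (n * psi (lam / n)) * sqrt (2 * pi)"
  have n0: "n > 0" and sqrt_sq: "(sqrt n)\<^sup>2 = n" and "12 * n - 1 > 0"
    using erlang_load by auto
  have "lam / s\<^sup>2 + (s\<^sup>2 - lam) / s * (s * W + 2 / (3 * s) + P / (12 * s\<^sup>2 - 1))
      = 1 + (s\<^sup>2 - lam) * (W - 1 / (3 * s\<^sup>2) + P / (s * (12 * s\<^sup>2 - 1)))"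
    if "s > 0" "12 * s\<^sup>2 - 1 > 0" for s :: real
    using that by (simp add: field_simps power2_eq_square)
  from this[of "sqrt n"] have "lam / n + (n - lam) / sqrt n * (sqrt n * W + 2 / (3 * sqrt n) + P / (12 * n - 1))
      = 1 + (n - lam) * (W - 1 / (3 * n) + P / (sqrt n * (12 * n - 1)))"
    using n0 \<open>12 * n - 1 > 0\<close> by (simp add: sqrt_sq)
  moreover have "1 / (phi a * (12 * n - 1)) = P / (12 * n - 1)"
    if "a = sqrt (- 2 * n * (1 - lam / n + ln (lam / n)))" for a
  proof -
    have "1 / (phi a * (12 * n - 1)) = (1 / phi a) / (12 * n - 1)"
      by simp
    then show ?thesis
      unfolding that inverse_phi_sqrt_psi[OF n0 erlang_load(3,4)] P_def .
  qed
  ultimately show ?thesis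
    unfolding LB_def Let_def n[symmetric] Phi_div_phi_sqrt_psi[OF n0 erlang_load(3,4)] W_def P_def
    by simp
qed

end

lemma inverse_one_plus_diff_le:
  fixes X Y e :: real
  assumes "X \<ge> 0" "Y \<ge> 0" "e \<ge> 0" "\<bar>X - Y\<bar> \<le> e * Y"
  shows "\<bar>inverse (1 + X) - inverse (1 + Y)\<bar> \<le> e"
proof -
  have "\<bar>inverse (1 + X) - inverse (1 + Y)\<bar> = \<bar>X - Y\<bar> / ((1 + X) * (1 + Y))"
    using assms by (simp add: field_simps abs_minus_commute)
  also have "\<dots> \<le> e * Y / ((1 + X) * (1 + Y))"
    using assms by (intro divide_right_mono) auto
  also have "\<dots> \<le> e * Y / (1 + Y)"
    using assms by (intro divide_left_mono) (auto intro!: mult_nonneg_nonneg)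
  also have "\<dots> \<le> e"
    using assms by (simp add: field_simps)
  finally show ?thesis .
qed

lemma inverse_one_plus_perturbed_diff_le:
  fixes F W T E m e :: real
  assumes "\<bar>F - W\<bar> \<le> e/4 * W" and "0 \<le> T" "T \<le> e/8 * W" and "0 \<le> E" "E \<le> e/8 * W"
    and "0 < W" "0 < e" "e \<le> 1" "0 \<le> F" "0 \<le> m"
  shows "\<bar>inverse (1 + m * F) - inverse (1 + m * (W - T + E))\<bar> \<le> e"
proof (rule inverse_one_plus_diff_le)
  have "e * W \<le> W"
    using assms by (intro mult_left_le_one_le) auto
  then have "W/2 \<le> W - T + E"
    using assms by linarith
  have "\<bar>F - (W - T + E)\<bar> \<le> \<bar>F - W\<bar> + T + E"
    using assms by linarith
  also have "\<dots> \<le> e * (W/2)"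
    using assms by linarith
  also have "\<dots> \<le> e * (W - T + E)"
    using \<open>W/2 \<le> W - T + E\<close> assms by (intro mult_left_mono) auto
  finally have "\<bar>F - (W - T + E)\<bar> \<le> e * (W - T + E)" .
  then have "m * \<bar>F - (W - T + E)\<bar> \<le> m * (e * (W - T + E))"
    using assms by (intro mult_left_mono) auto
  moreover have "\<bar>m * F - m * (W - T + E)\<bar> = m * \<bar>F - (W - T + E)\<bar>"
    using assms by (simp add: abs_mult right_diff_distrib[symmetric])
  ultimately show "\<bar>m * F - m * (W - T + E)\<bar> \<le> e * (m * (W - T + E))"
    by (simp add: mult.left_commute)
  show "0 \<le> m * (W - T + E)"
    using \<open>W/2 \<le> W - T + E\<close> assms by simp
qed (use assms in auto)

lemma J_gauss_dominates_corrections: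
  fixes n \<rho> e :: real
  assumes n: "1 \<le> n" and \<rho>: "0 < \<rho>" "\<rho> < 1" and e: "0 < e"
    and large: "1 / sqrt n \<le> 3/8 * e * (sqrt (2 * pi) * Phi 0)" "1 / (12 * n - 1) \<le> e/8 * Phi 0"
  defines "W \<equiv> exp (n * psi \<rho>) * J_gauss n \<rho>"
  shows "0 < W" "1 / (3 * n) \<le> e/8 * W"
    "exp (n * psi \<rho>) * sqrt (2 * pi) / (sqrt n * (12 * n - 1)) \<le> e/8 * W"
proof -
  define K where "K = exp (n * psi \<rho>)"
  have K: "1 \<le> K"
    using psi_nonneg[OF \<rho>(1)] n by (simp add: K_def)
  have "12 * n - 1 > 0" and c: "0 < sqrt (2 * pi) * Phi 0 / sqrt n"
    using n Phi_0_pos by auto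
  have W: "K * (sqrt (2 * pi) * Phi 0 / sqrt n) \<le> W"
    unfolding W_def K_def[symmetric] using J_gauss_ge[of n \<rho>] \<rho> n K by (intro mult_left_mono) auto
  moreover have "1 * (sqrt (2 * pi) * Phi 0 / sqrt n) \<le> K * (sqrt (2 * pi) * Phi 0 / sqrt n)"
    using K c by (intro mult_right_mono) auto
  ultimately have W_ge: "sqrt (2 * pi) * Phi 0 / sqrt n \<le> W"
    by simp
  with c show W_pos: "0 < W"
    by linarith
  have "1 / (3 * n) = (1 / sqrt n) * (1 / sqrt n) / 3"
    using n by (simp add: real_sqrt_mult[symmetric])
  also have "\<dots> \<le> (3/8 * e * (sqrt (2 * pi) * Phi 0)) * (1 / sqrt n) / 3"
    using large(1) n by (intro divide_right_mono mult_right_mono) auto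
  also have "\<dots> = e/8 * (sqrt (2 * pi) * Phi 0 / sqrt n)"
    by simp
  also have "\<dots> \<le> e/8 * W"
    using W_ge e by (intro mult_left_mono) auto
  finally show "1 / (3 * n) \<le> e/8 * W" .
  have "K * sqrt (2 * pi) / (sqrt n * (12 * n - 1))
      = K * (sqrt (2 * pi) * Phi 0 / sqrt n) * (1 / (12 * n - 1)) / Phi 0"
    using Phi_0_pos by simp
  also have "\<dots> \<le> W * (e/8 * Phi 0) / Phi 0"
    using W large(2) Phi_0_pos \<open>12 * n - 1 > 0\<close> K W_pos c
    by (intro divide_right_mono mult_mono) auto
  also have "\<dots> = e/8 * W"
    using Phi_0_pos by simp
  finally show "exp (n * psi \<rho>) * sqrt (2 * pi) / (sqrt n * (12 * n - 1)) \<le> e/8 * W"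
    by (simp add: K_def)
qed

lemma erlang_bounds_close_at:
  fixes lam \<beta> n e :: real
  assumes "1 \<le> lam" "0 < \<beta>" and n: "n = lam + \<beta> * sqrt lam" and e: "0 < e" "e \<le> 1"
    and laplace: "\<bar>J_erlang n (lam / n) - J_gauss n (lam / n)\<bar> \<le> e/4 * J_gauss n (lam / n)"
    and large: "1 / sqrt n \<le> 3/8 * e * (sqrt (2 * pi) * Phi 0)" "1 / (12 * n - 1) \<le> e/8 * Phi 0"
  shows "\<bar>alpha_tilde \<beta> lam - LB \<beta> lam\<bar> \<le> e \<and> \<bar>UB \<beta> lam - alpha_tilde \<beta> lam\<bar> \<le> e"
proof -
  note load = erlang_load[OF assms(1-3)]
  define K where "K = exp (n * psi (lam / n))"
  define W where "W = K * J_gauss n (lam / n)"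
  define F where "F = K * J_erlang n (lam / n)"
  define E where "E = K * sqrt (2 * pi) / (sqrt n * (12 * n - 1))"
  note small = J_gauss_dominates_corrections[OF load(2-4) e(1) large, folded K_def W_def, folded E_def]
  have FW: "\<bar>F - W\<bar> \<le> e/4 * W"
    using mult_left_mono[OF laplace, of K]
    by (simp add: K_def F_def W_def abs_mult flip: right_diff_distrib)
  have nonneg: "0 \<le> E" "0 \<le> F" "0 \<le> n - lam"
    using J_erlang_nonneg[of n "lam / n"] load by (auto simp: E_def F_def K_def)
  have "\<bar>alpha_tilde \<beta> lam - LB \<beta> lam\<bar> \<le> e"
    using inverse_one_plus_perturbed_diff_le[OF FW _ small(2) nonneg(1) small(3) small(1) e nonneg(2,3)]
      load
    unfolding alpha_tilde_eq[OF assms(1-3)] LB_eq[OF assms(1-3)]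
    by (simp add: F_def W_def E_def K_def)
  moreover have "\<bar>UB \<beta> lam - alpha_tilde \<beta> lam\<bar> \<le> e"
    using inverse_one_plus_perturbed_diff_le[OF FW _ small(2) _ _ small(1) e nonneg(2,3), of 0]
      load small(1) e
    unfolding alpha_tilde_eq[OF assms(1-3)] UB_eq[OF assms(1-3)]
    by (simp add: F_def W_def K_def abs_minus_commute)
  ultimately show ?thesis ..
qed

lemma erlang_bounds_close:
  fixes e :: real
  assumes e: "0 < e" "e \<le> 1"
  shows "eventually (\<lambda>lam. \<forall>\<beta>>0.
    \<bar>alpha_tilde \<beta> lam - LB \<beta> lam\<bar> \<le> e \<and> \<bar>UB \<beta> lam - alpha_tilde \<beta> lam\<bar> \<le> e) at_top"
proof -
  have c: "0 < 3/8 * e * (sqrt (2 * pi) * Phi 0)" "0 < e/8 * Phi 0"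
    using e Phi_0_pos by auto
  have "((\<lambda>n::real. 1 / sqrt n) \<longlongrightarrow> 0) at_top" "((\<lambda>n::real. 1 / (12 * n - 1)) \<longlongrightarrow> 0) at_top"
    by real_asymp+
  from order_tendstoD(2)[OF this(1) c(1)] order_tendstoD(2)[OF this(2) c(2)]
    J_erlang_close_J_gauss[of "e/4"] \<open>0 < e\<close>
  have "eventually (\<lambda>n. (\<forall>\<rho>. 0 < \<rho> \<longrightarrow> \<rho> < 1 \<longrightarrow>
        \<bar>J_erlang n \<rho> - J_gauss n \<rho>\<bar> \<le> e/4 * J_gauss n \<rho>)
      \<and> 1 / sqrt n \<le> 3/8 * e * (sqrt (2 * pi) * Phi 0) \<and> 1 / (12 * n - 1) \<le> e/8 * Phi 0) at_top"
    by (simp add: eventually_conj_iff eventually_mono)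
  from eventually_all_ge_at_top[OF this] eventually_ge_at_top[of 1] show ?thesis
  proof eventually_elim
    case (elim lam)
    show ?case
    proof (intro allI impI)
      fix \<beta> :: real
      assume "\<beta> > 0"
      define n where "n = lam + \<beta> * sqrt lam"
      note load = erlang_load[OF elim(2) \<open>\<beta> > 0\<close> n_def]
      show "\<bar>alpha_tilde \<beta> lam - LB \<beta> lam\<bar> \<le> e \<and> \<bar>UB \<beta> lam - alpha_tilde \<beta> lam\<bar> \<le> e"
        using elim(1)[rule_format, of n] load
        by (intro erlang_bounds_close_at[OF elim(2) \<open>\<beta> > 0\<close> n_def e]) auto
    qed
  qed
qed

lemma tendsto_SUP_0_uniform:
  fixes f :: "'a \<Rightarrow> 'b \<Rightarrow> real"
  assumes "A \<noteq> {}" and uniform: "\<And>e. 0 < e \<Longrightarrow> eventually (\<lambda>x. \<forall>y\<in>A. \<bar>f y x\<bar> \<le> e) F"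
  shows "((\<lambda>x. SUP y\<in>A. f y x) \<longlongrightarrow> 0) F"
proof (rule tendstoI)
  fix e :: real
  assume "e > 0"
  obtain y0 where "y0 \<in> A"
    using \<open>A \<noteq> {}\<close> by blast
  have "eventually (\<lambda>x. \<forall>y\<in>A. \<bar>f y x\<bar> \<le> e/2) F"
    by (rule uniform) (simp add: \<open>e > 0\<close>)
  then show "eventually (\<lambda>x. dist (SUP y\<in>A. f y x) 0 < e) F"
  proof (rule eventually_mono)
    fix x
    assume bound: "\<forall>y\<in>A. \<bar>f y x\<bar> \<le> e/2"
    then have "(SUP y\<in>A. f y x) \<le> e/2"
      using \<open>A \<noteq> {}\<close> by (intro cSUP_least) auto
    moreover have "f y0 x \<le> (SUP y\<in>A. f y x)"
      using bound \<open>y0 \<in> A\<close> by (intro cSUP_upper bdd_aboveI2[where M = "e/2"]) auto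
    moreover have "- (e/2) \<le> f y0 x"
      using bound \<open>y0 \<in> A\<close> by auto
    ultimately show "dist (SUP y\<in>A. f y x) 0 < e"
      using \<open>e > 0\<close> by (simp add: dist_real_def abs_less_iff)
  qed
qed

theorem theorem3:
  shows "((\<lambda>lam. SUP \<beta>\<in>{0<..}. alpha_tilde \<beta> lam - LB \<beta> lam) \<longlongrightarrow> 0) at_top \<and>
         ((\<lambda>lam. SUP \<beta>\<in>{0<..}. UB \<beta> lam - alpha_tilde \<beta> lam) \<longlongrightarrow> 0) at_top"
proof -
  have close: "eventually (\<lambda>lam. \<forall>\<beta>\<in>{0<..}.
      \<bar>alpha_tilde \<beta> lam - LB \<beta> lam\<bar> \<le> e \<and> \<bar>UB \<beta> lam - alpha_tilde \<beta> lam\<bar> \<le> e) at_top"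
    if "e > 0" for e :: real
    using erlang_bounds_close[of "min e 1"] that
    by (auto elim!: eventually_mono simp: min_le_iff_disj)
  have "(1::real) \<in> {0<..}"
    by simp
  then have nonempty: "{0<..} \<noteq> ({} :: real set)"
    by blast
  show ?thesis
  proof (intro conjI tendsto_SUP_0_uniform[OF nonempty])
    show "eventually (\<lambda>lam. \<forall>\<beta>\<in>{0<..}. \<bar>alpha_tilde \<beta> lam - LB \<beta> lam\<bar> \<le> e) at_top"
      if "e > 0" for e
      using close[OF that] by (rule eventually_mono) blast
    show "eventually (\<lambda>lam. \<forall>\<beta>\<in>{0<..}. \<bar>UB \<beta> lam - alpha_tilde \<beta> lam\<bar> \<le> e) at_top"
      if "e > 0" for e
      using close[OF that] by (rule eventually_mono) blast
  qed
qed

end
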